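(* Let $V$ be a commutative unital quantale whose underlying lattice is a frame. A $V$-group $(X,a,+)$ is regular if and only if it is symmetric. Hence, when $\otimes=\wedge$ in $V$, a $V$-group is regular if and only if it is an internal group in $\mathsf{VCat}$.
   Context: A commutative unital quantale $V$ is a complete lattice with a commutative associative operation $\otimes$ with unit $k$ preserving arbitrary joins in each variable. A $V$-category $(X,a)$: $a\colon X\times X\to V$ with $k\le a(x,x)$ and $a(x,x')\otimes a(x',x'')\le a(x,x'')$; $V$-functors are maps $f$ with $a(x,x')\le b(f(x),f(x'))$, forming $\mathsf{VCat}$. $(X,a)$ is regular if $a(x_1,x_2)\otimes a(x_1,x_3)\le a(x_2,x_3)$ for all $x_1,x_2,x_3\in X$, and symmetric if $a(x,x')=a(x',x)$ for all $x,x'$. A $V$-group $(X,a,+)$ is a $V$-category with a group structure (additive, not necessarily abelian) such that $a(x_1,x_2)\otimes a(x_1',x_2')\le a(x_1+x_1',x_2+x_2')$; it is regular (resp. symmetric) if its $V$-category is. An internal group in $\mathsf{VCat}$ is a group object for the cartesian product of $\mathsf{VCat}$ (the product of $(X,a),(Y,b)$ being $X\times Y$ with $(a\wedge b)((x,y),(x',y'))=a(x,x')\wedge b(y,y')$), i.e. a group whose operation, inversion and unit are $V$-functors. *)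

theory Defs
  imports Main
begin

text \<open>A commutative unital quantale on a complete lattice 'v: tensor t, unit k.
  Join preservation in the second variable plus commutativity gives it in each variable.\<close>
definition comm_unital_quantale :: "('v::complete_lattice \<Rightarrow> 'v \<Rightarrow> 'v) \<Rightarrow> 'v \<Rightarrow> bool" where
  "comm_unital_quantale t k \<longleftrightarrow>
     (\<forall>x y z. t (t x y) z = t x (t y z)) \<and>
     (\<forall>x y. t x y = t y x) \<and>
     (\<forall>x. t k x = x) \<and>
     (\<forall>x S. t x (Sup S) = (SUP s\<in>S. t x s))"

definition frame :: "'v::complete_lattice itself \<Rightarrow> bool" where
  "frame _ \<longleftrightarrow> (\<forall>(x::'v) S. inf x (Sup S) = (SUP s\<in>S. inf x s))"

definition vcat :: "('v::complete_lattice \<Rightarrow> 'v \<Rightarrow> 'v) \<Rightarrow> 'v \<Rightarrow> ('x \<Rightarrow> 'x \<Rightarrow> 'v) \<Rightarrow> bool" where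
  "vcat t k a \<longleftrightarrow> (\<forall>x. k \<le> a x x) \<and> (\<forall>x y z. t (a x y) (a y z) \<le> a x z)"

definition vfunctor :: "('x \<Rightarrow> 'x \<Rightarrow> 'v::complete_lattice) \<Rightarrow> ('y \<Rightarrow> 'y \<Rightarrow> 'v) \<Rightarrow> ('x \<Rightarrow> 'y) \<Rightarrow> bool" where
  "vfunctor a b f \<longleftrightarrow> (\<forall>x y. a x y \<le> b (f x) (f y))"

definition vgroup :: "('v::complete_lattice \<Rightarrow> 'v \<Rightarrow> 'v) \<Rightarrow> 'v \<Rightarrow> ('x::group_add \<Rightarrow> 'x \<Rightarrow> 'v) \<Rightarrow> bool" where
  "vgroup t k a \<longleftrightarrow> vcat t k a \<and>
     (\<forall>x1 x2 y1 y2. t (a x1 x2) (a y1 y2) \<le> a (x1 + y1) (x2 + y2))"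

definition regular :: "('v::complete_lattice \<Rightarrow> 'v \<Rightarrow> 'v) \<Rightarrow> ('x \<Rightarrow> 'x \<Rightarrow> 'v) \<Rightarrow> bool" where
  "regular t a \<longleftrightarrow> (\<forall>x1 x2 x3. t (a x1 x2) (a x1 x3) \<le> a x2 x3)"

definition symmetric :: "('x \<Rightarrow> 'x \<Rightarrow> 'v) \<Rightarrow> bool" where
  "symmetric a \<longleftrightarrow> (\<forall>x y. a x y = a y x)"

definition prod_vcat :: "('x \<Rightarrow> 'x \<Rightarrow> 'v::complete_lattice) \<Rightarrow> ('y \<Rightarrow> 'y \<Rightarrow> 'v) \<Rightarrow> ('x \<times> 'y \<Rightarrow> 'x \<times> 'y \<Rightarrow> 'v)" where
  "prod_vcat a b = (\<lambda>(x, y) (x', y'). inf (a x x') (b y y'))"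

definition terminal_vcat :: "unit \<Rightarrow> unit \<Rightarrow> 'v::complete_lattice" where
  "terminal_vcat _ _ = top"

definition internal_group :: "('v::complete_lattice \<Rightarrow> 'v \<Rightarrow> 'v) \<Rightarrow> 'v \<Rightarrow> ('x::group_add \<Rightarrow> 'x \<Rightarrow> 'v) \<Rightarrow> bool" where
  "internal_group t k a \<longleftrightarrow> vcat t k a \<and>
     vfunctor (prod_vcat a a) a (\<lambda>(x, y). x + y) \<and>
     vfunctor a a uminus \<and>
     vfunctor terminal_vcat a (\<lambda>_. 0)"

end

theory Submission
  imports Defs
begin

text \<open>In a V-group, translating by the reflexive elements a(-x,-x) and a(-y,-y) gives
  a(x,y) \<le> a(0,-x+y) \<le> a(-y,-x), so inversion reverses the structure; hence inversion is
  a V-functor exactly when a is symmetric. Regularity yields symmetry by taking x3 = x1 and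
  using k \<le> a(x1,x1), and symmetry turns regularity into transitivity. When the tensor is
  the meet, its unit is top, so addition and the unit of the group are V-functors for free
  and only inversion remains.\<close>

lemma quantale_tensor_mono_right:
  assumes "comm_unital_quantale t k" and "y \<le> z"
  shows "t x y \<le> t x z"
proof -
  have "t x z = t x (Sup {y, z})"
    using \<open>y \<le> z\<close> by (simp add: sup_absorb2)
  also have "\<dots> = (SUP s\<in>{y, z}. t x s)"
    using assms(1) unfolding comm_unital_quantale_def by blast
  also have "\<dots> = sup (t x y) (t x z)"
    by simp
  finally show ?thesis
    by (metis sup.cobounded1)
qed

lemma quantale_tensor_mono_left:
  assumes "comm_unital_quantale t k" and "y \<le> z"
  shows "t y x \<le> t z x"
  using quantale_tensor_mono_right[OF assms] assms(1)
  unfolding comm_unital_quantale_def by metis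

lemma quantale_unit_left: "comm_unital_quantale t k \<Longrightarrow> t k x = x"
  and quantale_unit_right: "comm_unital_quantale t k \<Longrightarrow> t x k = x"
  unfolding comm_unital_quantale_def by metis+

lemma quantale_inf_unit_eq_top:
  assumes "comm_unital_quantale inf k"
  shows "k = top"
  using quantale_unit_left[OF assms, of top] by (simp add: inf_absorb2)

lemma vcat_refl: "vcat t k a \<Longrightarrow> k \<le> a x x"
  and vcat_trans: "vcat t k a \<Longrightarrow> t (a x y) (a y z) \<le> a x z"
  unfolding vcat_def by blast+

lemma vgroup_vcat: "vgroup t k a \<Longrightarrow> vcat t k a"
  and vgroup_add: "vgroup t k a \<Longrightarrow> t (a x1 x2) (a y1 y2) \<le> a (x1 + y1) (x2 + y2)"
  unfolding vgroup_def by blast+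

lemma symmetricI:
  fixes a :: "'x \<Rightarrow> 'x \<Rightarrow> 'v::order"
  assumes "\<And>x y. a x y \<le> a y x"
  shows "symmetric a"
  unfolding symmetric_def using assms by (blast intro: order.antisym)

lemma regular_imp_symmetric:
  assumes q: "comm_unital_quantale t k" and "vcat t k a" and "regular t a"
  shows "symmetric a"
proof (rule symmetricI)
  fix x y
  have "a x y = t (a x y) k"
    using quantale_unit_right[OF q] by simp
  also have "\<dots> \<le> t (a x y) (a x x)"
    using quantale_tensor_mono_right[OF q vcat_refl[OF \<open>vcat t k a\<close>]] .
  also have "\<dots> \<le> a y x"
    using \<open>regular t a\<close> unfolding regular_def by blast
  finally show "a x y \<le> a y x" .
qed

lemma symmetric_imp_regular:
  assumes "vcat t k a" and "symmetric a"
  shows "regular t a"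
  using vcat_trans[OF assms(1)] assms(2) unfolding regular_def symmetric_def by metis

lemma vcat_regular_iff_symmetric:
  assumes "comm_unital_quantale t k" and "vcat t k a"
  shows "regular t a \<longleftrightarrow> symmetric a"
  using regular_imp_symmetric[OF assms] symmetric_imp_regular[OF assms(2)] by blast

lemma vgroup_le_uminus_swap:
  fixes a :: "'x::group_add \<Rightarrow> 'x \<Rightarrow> 'v::complete_lattice"
  assumes q: "comm_unital_quantale t k" and g: "vgroup t k a"
  shows "a x y \<le> a (-y) (-x)"
proof -
  note refl = vcat_refl[OF vgroup_vcat[OF g]]
  have "a x y = t k (a x y)"
    using quantale_unit_left[OF q] by simp
  also have "\<dots> \<le> t (a (-x) (-x)) (a x y)"
    using quantale_tensor_mono_left[OF q refl] .
  also have "\<dots> \<le> a 0 (-x + y)"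
    using vgroup_add[OF g, of "-x" "-x" x y] by simp
  also have "\<dots> = t (a 0 (-x + y)) k"
    using quantale_unit_right[OF q] by simp
  also have "\<dots> \<le> t (a 0 (-x + y)) (a (-y) (-y))"
    using quantale_tensor_mono_right[OF q refl] .
  also have "\<dots> \<le> a (0 + -y) (-x + y + -y)"
    using vgroup_add[OF g] .
  also have "\<dots> = a (-y) (-x)"
    by (simp add: add.assoc)
  finally show ?thesis .
qed

lemma vgroup_symmetric_iff_vfunctor_uminus:
  fixes a :: "'x::group_add \<Rightarrow> 'x \<Rightarrow> 'v::complete_lattice"
  assumes "comm_unital_quantale t k" and "vgroup t k a"
  shows "symmetric a \<longleftrightarrow> vfunctor a a uminus"
proof
  assume "symmetric a"
  then show "vfunctor a a uminus"
    using vgroup_le_uminus_swap[OF assms] unfolding symmetric_def vfunctor_def by metis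
next
  assume uminus: "vfunctor a a uminus"
  show "symmetric a"
  proof (rule symmetricI)
    fix x y
    have "a x y \<le> a (-y) (-x)"
      using vgroup_le_uminus_swap[OF assms] .
    also have "\<dots> \<le> a (- (-y)) (- (-x))"
      using uminus unfolding vfunctor_def by blast
    finally show "a x y \<le> a y x"
      by simp
  qed
qed

lemma inf_vgroup_internal_group_iff_vfunctor_uminus:
  fixes a :: "'x::group_add \<Rightarrow> 'x \<Rightarrow> 'v::complete_lattice"
  assumes q: "comm_unital_quantale inf k" and g: "vgroup inf k a"
  shows "internal_group inf k a \<longleftrightarrow> vfunctor a a uminus"
proof -
  have "vfunctor (prod_vcat a a) a (\<lambda>(x, y). x + y)"
    using vgroup_add[OF g] unfolding vfunctor_def prod_vcat_def by auto
  moreover have "vfunctor terminal_vcat a (\<lambda>_. 0)"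
    using vcat_refl[OF vgroup_vcat[OF g]] quantale_inf_unit_eq_top[OF q]
    unfolding vfunctor_def terminal_vcat_def by simp
  ultimately show ?thesis
    using vgroup_vcat[OF g] unfolding internal_group_def by blast
qed

theorem corollary5p4:
  fixes t :: "'v::complete_lattice \<Rightarrow> 'v \<Rightarrow> 'v" and k :: 'v
    and a :: "'x::group_add \<Rightarrow> 'x \<Rightarrow> 'v"
  assumes "comm_unital_quantale t k"
    and "frame TYPE('v)"
    and "vgroup t k a"
  shows "(regular t a \<longleftrightarrow> symmetric a)
    \<and> (t = inf \<longrightarrow> (regular t a \<longleftrightarrow> internal_group t k a))"
proof -
  have regular_iff: "regular t a \<longleftrightarrow> symmetric a"
    using vcat_regular_iff_symmetric[OF assms(1) vgroup_vcat[OF assms(3)]] .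
  moreover have "regular t a \<longleftrightarrow> internal_group t k a" if "t = inf"
    using regular_iff vgroup_symmetric_iff_vfunctor_uminus[OF assms(1,3)]
      inf_vgroup_internal_group_iff_vfunctor_uminus[of k a] assms(1,3) that
    by simp
  ultimately show ?thesis
    by blast
qed

end
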